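(* Let $S$ be a numerical semigroup, let $\Lambda\subseteq\mathrm{IBetti}(S)$ and let $s\in S\setminus\Lambda$. Then $\mathrm B(s;\Lambda)\subseteq\mathrm Z(s)\setminus\mathrm I_b(S)$. Moreover, if $\{b\in\mathrm{IBetti}(S): b<_S s\}\subseteq\Lambda$, then $\mathrm B(s;\Lambda)=\mathrm Z(s)\setminus\mathrm I_b(S)$.
   Context: A numerical semigroup $S$ is a submonoid of $(\mathbb N,+)$ with finite complement, minimally generated by $\{n_1,\dots,n_e\}$. Write $a\le_S b$ if $b-a\in S$, and $a<_S b$ if moreover $a\ne b$. Let $\varphi:\mathbb N^e\to S$, $\varphi(a)=\sum_ia_in_i$; for $s\in S$, $\mathrm Z(s)=\varphi^{-1}(s)$. $\nabla_s$ is the graph on $\mathrm Z(s)$ with distinct $x,y$ adjacent iff $x\cdot y\neq0$; $s$ is a Betti element if $\nabla_s$ is disconnected; $\mathrm{Betti}(S)$ is the set of Betti elements. A factorization $z\in\mathrm Z(s)$ is isolated if $z\cdot x=0$ for all $x\in\mathrm Z(s)\setminus\{z\}$; $\mathrm I(s)$ is the set of isolated factorizations of $s$ and, for $\Lambda\subseteq S$, $\mathrm I(\Lambda)=\bigcup_{t\in\Lambda}\mathrm I(t)$. $\mathrm I_s(S)$ is the set of $z\in\mathbb N^e$ such that $\varphi(z)$ has exactly one factorization; $\mathrm I_b(S)=\bigcup_{b\in\mathrm{Betti}(S)}\mathrm I(b)$. $\mathrm{IBetti}(S)$ is the set of Betti elements $b$ with $\mathrm I(b)\ne\emptyset$. For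 $\Lambda\subseteq S$ and $s\in S$, the set of Betti restricted factorizations is $\mathrm B(s;\Lambda)=\{w+x_1+\cdots+x_l\in\mathrm Z(s): w\in\mathrm I_s(S),\ l\ge0,\ x_1,\dots,x_l\in\mathrm I(\Lambda)\}$. *)

theory Defs
  imports Main
begin

text \<open>Factorizations are elements of N^e, represented as lists of length e = length ns,
  where ns = [n_1, ..., n_e] is the list of minimal generators.\<close>

definition numerical_semigroup :: "nat set \<Rightarrow> bool" where
  "numerical_semigroup S \<longleftrightarrow> 0 \<in> S \<and> (\<forall>a\<in>S. \<forall>b\<in>S. a + b \<in> S) \<and> finite (UNIV - S)"

definition facts :: "nat list \<Rightarrow> nat list set" where
  "facts ns = {a. length a = length ns}"

definition phi :: "nat list \<Rightarrow> nat list \<Rightarrow> nat" where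
  "phi ns a = (\<Sum>i<length ns. a ! i * ns ! i)"

definition generated :: "nat list \<Rightarrow> nat set" where
  "generated ns = phi ns ` facts ns"

definition minimally_generates :: "nat set \<Rightarrow> nat list \<Rightarrow> bool" where
  "minimally_generates S ns \<longleftrightarrow> distinct ns \<and> S = generated ns \<and>
     (\<forall>ms. set ms \<subset> set ns \<longrightarrow> generated ms \<noteq> S)"

definition le_S :: "nat set \<Rightarrow> nat \<Rightarrow> nat \<Rightarrow> bool" where
  "le_S S a b \<longleftrightarrow> a \<le> b \<and> b - a \<in> S"

definition lt_S :: "nat set \<Rightarrow> nat \<Rightarrow> nat \<Rightarrow> bool" where
  "lt_S S a b \<longleftrightarrow> le_S S a b \<and> a \<noteq> b"

definition Z :: "nat list \<Rightarrow> nat \<Rightarrow> nat list set" where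
  "Z ns s = {a \<in> facts ns. phi ns a = s}"

definition dotp :: "nat list \<Rightarrow> nat list \<Rightarrow> nat" where
  "dotp x y = (\<Sum>i<min (length x) (length y). x ! i * y ! i)"

definition vadd :: "nat list \<Rightarrow> nat list \<Rightarrow> nat list" where
  "vadd x y = map2 (+) x y"

definition nabla_edges :: "nat list \<Rightarrow> nat \<Rightarrow> (nat list \<times> nat list) set" where
  "nabla_edges ns s = {(x, y). x \<in> Z ns s \<and> y \<in> Z ns s \<and> x \<noteq> y \<and> dotp x y \<noteq> 0}"

definition nabla_connected :: "nat list \<Rightarrow> nat \<Rightarrow> bool" where
  "nabla_connected ns s \<longleftrightarrow> (\<forall>x\<in>Z ns s. \<forall>y\<in>Z ns s. (x, y) \<in> (nabla_edges ns s)\<^sup>*)"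

definition Betti :: "nat list \<Rightarrow> nat set" where
  "Betti ns = {b \<in> generated ns. \<not> nabla_connected ns b}"

definition Iso :: "nat list \<Rightarrow> nat \<Rightarrow> nat list set" where
  "Iso ns s = {z \<in> Z ns s. \<forall>x \<in> Z ns s - {z}. dotp z x = 0}"

definition IsoSet :: "nat list \<Rightarrow> nat set \<Rightarrow> nat list set" where
  "IsoSet ns L = (\<Union>t\<in>L. Iso ns t)"

definition I_s :: "nat list \<Rightarrow> nat list set" where
  "I_s ns = {z \<in> facts ns. Z ns (phi ns z) = {z}}"

definition I_b :: "nat list \<Rightarrow> nat list set" where
  "I_b ns = (\<Union>b\<in>Betti ns. Iso ns b)"

definition IBetti :: "nat list \<Rightarrow> nat set" where
  "IBetti ns = {b \<in> Betti ns. Iso ns b \<noteq> {}}"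

definition Bres :: "nat list \<Rightarrow> nat \<Rightarrow> nat set \<Rightarrow> nat list set" where
  "Bres ns s L = {y \<in> Z ns s. \<exists>w \<in> I_s ns. \<exists>xs. set xs \<subseteq> IsoSet ns L \<and>
      y = foldr vadd xs w}"

end

theory Submission
  imports Defs
begin

text \<open>If a factorization z of s is not the only factorization of s, take a componentwise
  minimal u \<le> z with the same property: u is isolated, so its value lies in IBetti(S).
  Peeling such pieces off writes z = w + x_1 + ... + x_l with w the unique factorization of
  its value and each x_j isolated in some b_j \<in> IBetti(S); as x_j \<le> z, b_j \<le>_S s, and
  b_j = s would force z = x_j \<in> I_b(S). Conversely, if y = x + r is isolated in s and x is an
  isolated factorization of a Betti element t, replacing x by another factorization of t
  gives a factorization of s sharing the support of r with y, so r = 0 and s = t.\<close>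

definition lev :: "nat list \<Rightarrow> nat list \<Rightarrow> bool" where
  "lev x y \<longleftrightarrow> length x = length y \<and> (\<forall>i<length x. x!i \<le> y!i)"

definition vsub :: "nat list \<Rightarrow> nat list \<Rightarrow> nat list" where
  "vsub x y = map2 (-) x y"

lemma length_vadd [simp]: "length (vadd x y) = min (length x) (length y)"
  by (simp add: vadd_def)

lemma nth_vadd [simp]: "i < length x \<Longrightarrow> i < length y \<Longrightarrow> vadd x y ! i = x!i + y!i"
  by (simp add: vadd_def)

lemma length_vsub [simp]: "length (vsub x y) = min (length x) (length y)"
  by (simp add: vsub_def)

lemma nth_vsub [simp]: "i < length x \<Longrightarrow> i < length y \<Longrightarrow> vsub x y ! i = x!i - y!i"
  by (simp add: vsub_def)

lemma lev_trans: "lev x y \<Longrightarrow> lev y z \<Longrightarrow> lev x z"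
  unfolding lev_def by (metis order_trans)

lemma vadd_vsub: "lev x z \<Longrightarrow> vadd x (vsub z x) = z"
  by (auto simp: lev_def intro!: nth_equalityI)

lemma dotp_neq_0_iff:
  "length x = length y \<Longrightarrow> dotp x y \<noteq> 0 \<longleftrightarrow> (\<exists>i<length x. 0 < x!i \<and> 0 < y!i)"
  by (auto simp: dotp_def)

lemma length_foldr_vadd:
  "\<forall>x\<in>set xs. length x = n \<Longrightarrow> length w = n \<Longrightarrow> length (foldr vadd xs w) = n"
  by (induction xs) auto

lemma lev_foldr_vadd:
  assumes "\<forall>x\<in>set xs. length x = n" "length w = n" "x \<in> set xs"
  shows "lev x (foldr vadd xs w)"
  using assms
proof (induction xs)
  case (Cons a xs)
  have "length (foldr vadd xs w) = n"
    using Cons.prems by (intro length_foldr_vadd) auto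
  with Cons show ?case by (auto simp: lev_def trans_le_add2)
qed simp

lemma phi_vadd:
  assumes "length x = length ns" "length y = length ns"
  shows "phi ns (vadd x y) = phi ns x + phi ns y"
  unfolding phi_def sum.distrib[symmetric] by (rule sum.cong) (auto simp: assms algebra_simps)

lemma phi_vsub:
  "lev x z \<Longrightarrow> length z = length ns \<Longrightarrow> phi ns z = phi ns x + phi ns (vsub z x)"
  using phi_vadd[of x ns "vsub z x"] vadd_vsub[of x z] by (auto simp: lev_def)

lemma phi_list_update_dec:
  assumes "i < length ns" "length u = length ns" "0 < u!i"
  shows "phi ns (u[i := u!i - 1]) + ns!i = phi ns u"
proof -
  have split: "phi ns a = a!i * ns!i + (\<Sum>j\<in>{..<length ns}-{i}. a!j * ns!j)" for a
    unfolding phi_def using assms(1) by (subst sum.remove[of _ i]) auto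
  have "(\<Sum>j\<in>{..<length ns}-{i}. u[i := u!i - 1]!j * ns!j) = (\<Sum>j\<in>{..<length ns}-{i}. u!j * ns!j)"
    by (rule sum.cong) auto
  moreover obtain k where "u!i = Suc k"
    using assms(3) gr0_conv_Suc by blast
  ultimately show ?thesis
    using split[of u] split[of "u[i := u!i - 1]"] assms by simp
qed

lemma phi_eq_0_imp_zero:
  assumes "\<forall>i<length ns. 0 < ns!i" "length a = length ns" "phi ns a = 0"
  shows "a = replicate (length ns) 0"
  using assms by (intro nth_equalityI) (fastforce simp: phi_def)+

lemma lev_phi_eq_imp_eq:
  assumes "\<forall>i<length ns. 0 < ns!i" "lev x z" "length z = length ns" "phi ns x = phi ns z"
  shows "x = z"
proof -
  have "vsub z x = replicate (length ns) 0"
    using assms phi_vsub[OF assms(2,3)] by (intro phi_eq_0_imp_zero) (auto simp: lev_def)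
  then show ?thesis
    using vadd_vsub[OF assms(2)] assms(2,3) by (auto simp: lev_def intro!: nth_equalityI)
qed

lemma le_S_phi_lev:
  assumes "lev x z" "length z = length ns"
  shows "le_S (generated ns) (phi ns x) (phi ns z)"
proof -
  have "phi ns (vsub z x) \<in> generated ns"
    using assms by (auto simp: generated_def facts_def lev_def)
  then show ?thesis
    using phi_vsub[OF assms] by (simp add: le_S_def)
qed

lemma phi_Cons: "phi (n#ns) (k#a) = k*n + phi ns a"
  unfolding phi_def by (simp only: length_Cons sum.lessThan_Suc_shift) simp

lemma generated_Cons: "generated (n#ns) = {k*n + y | k y. y \<in> generated ns}"
proof safe
  fix x assume "x \<in> generated (n#ns)"
  then obtain a where a: "length a = Suc (length ns)" "x = phi (n#ns) a"
    by (auto simp: generated_def facts_def)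
  then obtain k a' where "a = k#a'"
    by (cases a) auto
  then show "\<exists>k y. x = k*n + y \<and> y \<in> generated ns"
    using a phi_Cons by (auto simp: generated_def facts_def)
next
  fix k y assume "y \<in> generated ns"
  then obtain a where "length a = length ns" "y = phi ns a"
    by (auto simp: generated_def facts_def)
  then show "k*n + y \<in> generated (n#ns)"
    unfolding generated_def facts_def by (intro image_eqI[of _ _ "k#a"]) (auto simp: phi_Cons)
qed

lemma generated_removeAll_0: "generated (removeAll 0 ns) = generated ns"
  by (induction ns) (auto simp: generated_Cons)

lemma minimally_generates_pos:
  assumes "minimally_generates S ns"
  shows "\<forall>i<length ns. 0 < ns!i"
proof (rule ccontr)
  assume "\<not> ?thesis"
  then have "0 \<in> set ns"
    by (metis gr0I nth_mem)
  then have "set (removeAll 0 ns) \<subset> set ns"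
    by auto
  then show False
    using assms generated_removeAll_0[of ns] unfolding minimally_generates_def by blast
qed

lemma nabla_connected_if_subsingleton: "Z ns s \<subseteq> {x} \<Longrightarrow> nabla_connected ns s"
  unfolding nabla_connected_def by auto

lemma Betti_ex_other_fact:
  assumes "b \<in> Betti ns" "x \<in> Z ns b"
  obtains x' where "x' \<in> Z ns b" "x' \<noteq> x"
  using assms nabla_connected_if_subsingleton[of ns b x] by (auto simp: Betti_def)

lemma zero_notin_Betti:
  assumes "\<forall>i<length ns. 0 < ns!i"
  shows "0 \<notin> Betti ns"
proof -
  have "Z ns 0 \<subseteq> {replicate (length ns) 0}"
    using phi_eq_0_imp_zero[OF assms] by (auto simp: Z_def facts_def)
  then show ?thesis
    using nabla_connected_if_subsingleton by (auto simp: Betti_def)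
qed

lemma Iso_imp_IBetti:
  assumes "u \<in> Iso ns t" "u' \<in> Z ns t" "u' \<noteq> u"
  shows "t \<in> IBetti ns"
proof -
  have uZ: "u \<in> Z ns t"
    using assms(1) by (simp add: Iso_def)
  have "\<not> nabla_connected ns t"
  proof
    assume "nabla_connected ns t"
    then have "(u, u') \<in> (nabla_edges ns t)\<^sup>*"
      using uZ assms(2) unfolding nabla_connected_def by blast
    then obtain v where "(u, v) \<in> nabla_edges ns t"
      using assms(3) by (metis converse_rtranclE)
    then show False
      using assms(1) by (auto simp: nabla_edges_def Iso_def)
  qed
  moreover have "t \<in> generated ns"
    using uZ by (auto simp: Z_def generated_def)
  ultimately show ?thesis
    using assms(1) by (auto simp: IBetti_def Betti_def)
qed

lemma not_Iso_shrink:
  assumes pos: "\<forall>i<length ns. 0 < ns!i" and u: "u \<in> Z ns t" "u \<notin> Iso ns t"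
  obtains u0 where "lev u0 u" "phi ns u0 < phi ns u" "Z ns (phi ns u0) \<noteq> {u0}"
proof -
  obtain x where x: "x \<in> Z ns t" "x \<noteq> u" "dotp u x \<noteq> 0"
    using u by (auto simp: Iso_def)
  have lu: "length u = length ns" and lx: "length x = length ns"
    using u x by (auto simp: Z_def facts_def)
  obtain i where i: "i < length ns" "0 < u!i" "0 < x!i"
    using dotp_neq_0_iff[of u x] x lu lx by auto
  define u0 where "u0 = u[i := u!i - 1]"
  define x0 where "x0 = x[i := x!i - 1]"
  have pu: "phi ns u0 + ns!i = phi ns u"
    unfolding u0_def using phi_list_update_dec i lu by blast
  have px: "phi ns x0 + ns!i = phi ns x"
    unfolding x0_def using phi_list_update_dec i lx by blast
  have "x0 \<in> Z ns (phi ns u0)"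
    using pu px u x lx by (auto simp: Z_def facts_def x0_def)
  moreover have "x0 \<noteq> u0"
  proof
    assume "x0 = u0"
    then have "x!j = u!j" if "j < length ns" for j
      using i that unfolding x0_def u0_def
      by (cases "j = i") (auto simp: lu lx dest: arg_cong[where f = "\<lambda>v. v!j"])
    then show False
      using x(2) lu lx by (auto intro: nth_equalityI)
  qed
  moreover have "lev u0 u"
    using i lu by (simp add: lev_def u0_def nth_list_update)
  moreover have "phi ns u0 < phi ns u"
    using pu pos i by auto
  ultimately show ?thesis
    using that by blast
qed

lemma ex_lev_Iso_IBetti:
  assumes pos: "\<forall>i<length ns. 0 < ns!i" and z: "z \<in> facts ns" "z \<notin> I_s ns"
  obtains u where "lev u z" "u \<in> Iso ns (phi ns u)" "phi ns u \<in> IBetti ns"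
proof -
  define M where "M = {u \<in> facts ns. lev u z \<and> Z ns (phi ns u) \<noteq> {u}}"
  have "z \<in> M"
    using z by (auto simp: M_def I_s_def lev_def facts_def)
  then obtain u where uM: "u \<in> M" and umin: "\<And>v. v \<in> M \<Longrightarrow> phi ns u \<le> phi ns v"
    using ex_has_least_nat[of "\<lambda>v. v \<in> M" z "phi ns"] by blast
  have uZ: "u \<in> Z ns (phi ns u)"
    using uM by (auto simp: M_def Z_def)
  have iso: "u \<in> Iso ns (phi ns u)"
  proof (rule ccontr)
    assume "u \<notin> Iso ns (phi ns u)"
    then obtain u0 where u0: "lev u0 u" "phi ns u0 < phi ns u" "Z ns (phi ns u0) \<noteq> {u0}"
      using not_Iso_shrink[OF pos uZ] by blast
    have "lev u0 z"
      using u0(1) uM by (auto simp: M_def intro: lev_trans)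
    moreover have "length u0 = length ns"
      using u0(1) uM by (simp add: M_def facts_def lev_def)
    ultimately have "u0 \<in> M"
      using u0(3) by (simp add: M_def facts_def)
    then show False
      using umin u0(2) by fastforce
  qed
  obtain u' where "u' \<in> Z ns (phi ns u)" "u' \<noteq> u"
    using uM uZ by (auto simp: M_def)
  then show ?thesis
    using that iso Iso_imp_IBetti[OF iso] uM by (auto simp: M_def)
qed

lemma length_IsoSet: "x \<in> IsoSet ns A \<Longrightarrow> length x = length ns"
  by (auto simp: IsoSet_def Iso_def Z_def facts_def)

lemma ex_IBetti_decomposition:
  assumes pos: "\<forall>i<length ns. 0 < ns!i"
  shows "z \<in> facts ns \<Longrightarrow>
    \<exists>w\<in>I_s ns. \<exists>xs. set xs \<subseteq> IsoSet ns (IBetti ns) \<and> z = foldr vadd xs w"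
proof (induction "phi ns z" arbitrary: z rule: less_induct)
  case less
  show ?case
  proof (cases "z \<in> I_s ns")
    case True
    then show ?thesis by (intro bexI[of _ z] exI[of _ "[]"]) auto
  next
    case False
    obtain u where u: "lev u z" "u \<in> Iso ns (phi ns u)" "phi ns u \<in> IBetti ns"
      using ex_lev_Iso_IBetti[OF pos less.prems False] by blast
    have "phi ns u \<noteq> 0"
      using u(3) zero_notin_Betti[OF pos] by (auto simp: IBetti_def)
    moreover have lz: "length z = length ns"
      using less.prems by (simp add: facts_def)
    ultimately have "phi ns (vsub z u) < phi ns z"
      using phi_vsub[OF u(1)] by simp
    moreover have "vsub z u \<in> facts ns"
      using u(1) lz by (auto simp: facts_def lev_def)
    ultimately obtain w xs where
      w: "w \<in> I_s ns" "set xs \<subseteq> IsoSet ns (IBetti ns)" "vsub z u = foldr vadd xs w"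
      using less.hyps by blast
    have "z = foldr vadd (u#xs) w"
      using vadd_vsub[OF u(1)] w(3) by simp
    moreover have "u \<in> IsoSet ns (IBetti ns)"
      using u by (auto simp: IsoSet_def)
    ultimately show ?thesis
      using w by (intro bexI[of _ w] exI[of _ "u#xs"]) auto
  qed
qed

lemma vadd_Iso_eq:
  assumes y: "vadd x r \<in> Iso ns s"
    and len: "length x = length ns" "length r = length ns"
    and x': "x' \<in> Z ns (phi ns x)" "x' \<noteq> x"
  shows "vadd x r = x"
proof -
  have lx': "length x' = length ns"
    using x' by (simp add: Z_def facts_def)
  have "phi ns (vadd x' r) = phi ns (vadd x r)"
    using phi_vadd[OF lx' len(2)] phi_vadd[OF len] x' by (simp add: Z_def)
  then have "vadd x' r \<in> Z ns s"
    using y lx' len by (auto simp: Iso_def Z_def facts_def)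
  moreover have "vadd x' r \<noteq> vadd x r"
  proof
    assume "vadd x' r = vadd x r"
    then have "x'!i = x!i" if "i < length ns" for i
      using that lx' len by (metis nth_vadd add_right_cancel)
    then show False
      using x'(2) lx' len by (auto intro: nth_equalityI)
  qed
  ultimately have "dotp (vadd x r) (vadd x' r) = 0"
    using y by (auto simp: Iso_def)
  then have "r!i = 0" if "i < length ns" for i
    using that dotp_neq_0_iff[of "vadd x r" "vadd x' r"] lx' len by auto
  then show ?thesis
    using len by (auto intro: nth_equalityI)
qed

lemma Bres_Int_I_b_empty:
  assumes L: "L \<subseteq> Betti ns" and s: "s \<notin> L"
  shows "Bres ns s L \<inter> I_b ns = {}"
proof (intro equalityI subsetI, elim IntE)
  fix y assume "y \<in> Bres ns s L" "y \<in> I_b ns"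
  then obtain w xs where
    y: "y \<in> Z ns s" "w \<in> I_s ns" "set xs \<subseteq> IsoSet ns L" "y = foldr vadd xs w"
    and yI: "y \<in> Iso ns s" and sB: "s \<in> Betti ns"
    by (auto simp: Bres_def I_b_def Iso_def Z_def)
  show "y \<in> {}"
  proof (cases xs)
    case Nil
    then have "Z ns s \<subseteq> {y}"
      using y by (auto simp: I_s_def Z_def)
    then show ?thesis
      using sB nabla_connected_if_subsingleton by (auto simp: Betti_def)
  next
    case (Cons x rest)
    then obtain t where t: "t \<in> L" "x \<in> Iso ns t"
      using y(3) by (auto simp: IsoSet_def)
    then have tx: "t = phi ns x" "x \<in> Z ns t"
      by (auto simp: Iso_def Z_def)
    obtain x' where x': "x' \<in> Z ns (phi ns x)" "x' \<noteq> x"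
      using Betti_ex_other_fact[of t ns x] L t tx by auto
    have lens: "\<forall>v\<in>set xs. length v = length ns" "length w = length ns"
      using y(2,3) length_IsoSet by (auto simp: I_s_def facts_def)
    have "y = x"
      using vadd_Iso_eq[of x "foldr vadd rest w", OF _ _ _ x'] y(4) yI lens Cons
      by (simp add: length_foldr_vadd)
    then have "s = t"
      using yI t(2) by (auto simp: Iso_def Z_def)
    then show ?thesis
      using s t(1) by simp
  qed
qed simp

lemma Z_diff_I_b_subset_Bres:
  assumes pos: "\<forall>i<length ns. 0 < ns!i"
    and L: "{b \<in> IBetti ns. lt_S (generated ns) b s} \<subseteq> L"
  shows "Z ns s - I_b ns \<subseteq> Bres ns s L"
proof
  fix z assume z: "z \<in> Z ns s - I_b ns"
  then have lz: "length z = length ns" and pz: "phi ns z = s"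
    by (auto simp: Z_def facts_def)
  have "z \<in> facts ns"
    using lz by (simp add: facts_def)
  then obtain w xs where w: "w \<in> I_s ns" "set xs \<subseteq> IsoSet ns (IBetti ns)" "z = foldr vadd xs w"
    using ex_IBetti_decomposition[OF pos] by blast
  have lens: "\<forall>v\<in>set xs. length v = length ns" "length w = length ns"
    using w(1,2) length_IsoSet by (auto simp: I_s_def facts_def)
  have "set xs \<subseteq> IsoSet ns L"
  proof
    fix x assume x: "x \<in> set xs"
    then obtain t where t: "t \<in> IBetti ns" "x \<in> Iso ns t"
      using w(2) by (auto simp: IsoSet_def)
    then have pt: "phi ns x = t"
      by (simp add: Iso_def Z_def)
    have xz: "lev x z"
      using lev_foldr_vadd[OF lens x] w(3) by simp
    have "t \<noteq> s"
    proof
      assume "t = s"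
      then have "x = z"
        using lev_phi_eq_imp_eq[OF pos xz lz] pt pz by simp
      then show False
        using z t \<open>t = s\<close> by (auto simp: I_b_def IBetti_def)
    qed
    then have "lt_S (generated ns) t s"
      using le_S_phi_lev[OF xz lz] pt pz by (simp add: lt_S_def)
    then show "x \<in> IsoSet ns L"
      using L t by (auto simp: IsoSet_def)
  qed
  then show "z \<in> Bres ns s L"
    using z w by (auto simp: Bres_def)
qed

theorem lemma5p4:
  fixes S :: "nat set" and ns :: "nat list" and L :: "nat set" and s :: nat
  assumes "numerical_semigroup S"
    and "minimally_generates S ns"
    and "L \<subseteq> IBetti ns"
    and "s \<in> S" and "s \<notin> L"
  shows "Bres ns s L \<subseteq> Z ns s - I_b ns \<and>
    ({b \<in> IBetti ns. lt_S S b s} \<subseteq> L \<longrightarrow> Bres ns s L = Z ns s - I_b ns)"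
proof -
  have S: "S = generated ns"
    using assms(2) by (simp add: minimally_generates_def)
  have "Bres ns s L \<subseteq> Z ns s"
    by (auto simp: Bres_def)
  moreover have "Bres ns s L \<inter> I_b ns = {}"
    using Bres_Int_I_b_empty assms(3,5) by (auto simp: IBetti_def)
  moreover have "{b \<in> IBetti ns. lt_S S b s} \<subseteq> L \<Longrightarrow> Z ns s - I_b ns \<subseteq> Bres ns s L"
    using Z_diff_I_b_subset_Bres[OF minimally_generates_pos[OF assms(2)]] S by blast
  ultimately show ?thesis
    by blast
qed

end
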